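(* Let $n\ge5$, let $B=\mathrm{Sym}(n)$ with $+$ denoting composition of permutations, and let $c=(1\,2)$. Define $\lambda_a=\mathrm{id}$ for $a\in\mathrm{Alt}(n)$ and $\lambda_a(b)=c+b-c$ for $a\notin\mathrm{Alt}(n)$, and $a\circ b=a+\lambda_a(b)$. Then $(B,+,\circ)$ is a skew left brace, the set $X$ of all transpositions in $\mathrm{Sym}(n)$ satisfies $r_B(X\times X)=X\times X$, and $(X,r_B|_{X\times X})$ is a simple non-degenerate solution of the Yang--Baxter equation of cardinality $n(n-1)/2$.
   Context: A skew left brace is a triple $(B,+,\circ)$ with $(B,+)$ and $(B,\circ)$ groups and $a\circ(b+c)=a\circ b-a+a\circ c$; then $\lambda_a(b)=-a+a\circ b$, and $a^{-1}$ denotes the $\circ$-inverse. The associated solution is $r_B(a,b)=(\lambda_a(b),\lambda_a(b)^{-1}\circ a\circ b)$. A set-theoretic solution $(X,r)$: $r$ satisfies $(r\times\mathrm{id})(\mathrm{id}\times r)(r\times\mathrm{id})=(\mathrm{id}\times r)(r\times\mathrm{id})(\mathrm{id}\times r)$; writing $r(x,y)=(\lambda_x(y),\rho_y(x))$, non-degenerate means $r$ and all $\lambda_x,\rho_y$ are bijective. A morphism $f\colon(X,r)\to(Y,s)$ is a map with $(f\times f)r=s(f\times f)$; $(X,r)$ with $|X|>1$ is simple if every surjective morphism $(X,r)\to(Y,s)$ is bijective or has $|Y|=1$. *)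

theory Defs
  imports "HOL-Algebra.Group" "HOL-Combinatorics.Permutations" "HOL-Combinatorics.Transposition"
begin

definition grp :: "'a set \<Rightarrow> ('a \<Rightarrow> 'a \<Rightarrow> 'a) \<Rightarrow> 'a monoid" where
  "grp B op = \<lparr>carrier = B, monoid.mult = op,
      one = (THE e. e \<in> B \<and> (\<forall>x\<in>B. op e x = x \<and> op x e = x))\<rparr>"

definition skew_left_brace :: "'a set \<Rightarrow> ('a \<Rightarrow> 'a \<Rightarrow> 'a) \<Rightarrow> ('a \<Rightarrow> 'a \<Rightarrow> 'a) \<Rightarrow> bool" where
  "skew_left_brace B add circ \<longleftrightarrow>
     group (grp B add) \<and> group (grp B circ) \<and>
     (\<forall>a\<in>B. \<forall>b\<in>B. \<forall>c\<in>B.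
        circ a (add b c) = add (add (circ a b) (inv\<^bsub>grp B add\<^esub> a)) (circ a c))"

definition brace_lambda :: "'a set \<Rightarrow> ('a \<Rightarrow> 'a \<Rightarrow> 'a) \<Rightarrow> ('a \<Rightarrow> 'a \<Rightarrow> 'a) \<Rightarrow> 'a \<Rightarrow> 'a \<Rightarrow> 'a" where
  "brace_lambda B add circ a b = add (inv\<^bsub>grp B add\<^esub> a) (circ a b)"

definition brace_solution :: "'a set \<Rightarrow> ('a \<Rightarrow> 'a \<Rightarrow> 'a) \<Rightarrow> ('a \<Rightarrow> 'a \<Rightarrow> 'a) \<Rightarrow> 'a \<times> 'a \<Rightarrow> 'a \<times> 'a" where
  "brace_solution B add circ = (\<lambda>(a, b).
     (brace_lambda B add circ a b,
      circ (circ (inv\<^bsub>grp B circ\<^esub> (brace_lambda B add circ a b)) a) b))"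

definition is_solution :: "'a set \<Rightarrow> ('a \<times> 'a \<Rightarrow> 'a \<times> 'a) \<Rightarrow> bool" where
  "is_solution X r \<longleftrightarrow>
     (\<forall>p\<in>X \<times> X. r p \<in> X \<times> X) \<and>
     (\<forall>x\<in>X. \<forall>y\<in>X. \<forall>z\<in>X.
        (let (u1, v1) = r (x, y); (u2, v2) = r (v1, z); (u3, v3) = r (u1, u2)
         in let (p1, q1) = r (y, z); (p2, q2) = r (x, p1); (p3, q3) = r (q2, q1)
         in (u3, v3, v2) = (p2, p3, q3)))"

definition sol_lambda :: "('a \<times> 'a \<Rightarrow> 'a \<times> 'a) \<Rightarrow> 'a \<Rightarrow> 'a \<Rightarrow> 'a" where
  "sol_lambda r x y = fst (r (x, y))"

definition sol_rho :: "('a \<times> 'a \<Rightarrow> 'a \<times> 'a) \<Rightarrow> 'a \<Rightarrow> 'a \<Rightarrow> 'a" where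
  "sol_rho r y x = snd (r (x, y))"

definition non_degenerate :: "'a set \<Rightarrow> ('a \<times> 'a \<Rightarrow> 'a \<times> 'a) \<Rightarrow> bool" where
  "non_degenerate X r \<longleftrightarrow>
     bij_betw r (X \<times> X) (X \<times> X) \<and>
     (\<forall>x\<in>X. bij_betw (sol_lambda r x) X X) \<and>
     (\<forall>y\<in>X. bij_betw (sol_rho r y) X X)"

definition sol_morphism :: "'a set \<Rightarrow> ('a \<times> 'a \<Rightarrow> 'a \<times> 'a) \<Rightarrow> 'b set \<Rightarrow> ('b \<times> 'b \<Rightarrow> 'b \<times> 'b) \<Rightarrow> ('a \<Rightarrow> 'b) \<Rightarrow> bool" where
  "sol_morphism X r Y s f \<longleftrightarrow>
     f ` X \<subseteq> Y \<and>
     (\<forall>x\<in>X. \<forall>y\<in>X. map_prod f f (r (x, y)) = s (f x, f y))"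

text \<open>Simple solution; the targets (Y,s) range over solutions whose underlying set lives in an
  arbitrary type 'b (the type is a parameter, universally quantified at theorem level).\<close>
definition simple_solution :: "'b itself \<Rightarrow> 'a set \<Rightarrow> ('a \<times> 'a \<Rightarrow> 'a \<times> 'a) \<Rightarrow> bool" where
  "simple_solution (_ :: 'b itself) X r \<longleftrightarrow>
     1 < card X \<and>
     (\<forall>(Y :: 'b set) s f. is_solution Y s \<and> sol_morphism X r Y s f \<and> f ` X = Y \<longrightarrow>
        bij_betw f X Y \<or> (\<exists>y. Y = {y}))"

end

theory Submission
  imports Defs
begin

text \<open>
  Write \<open>\<lambda>\<^sub>a\<close> (here \<open>twist c a\<close>) for the identity when \<open>a\<close> is even and for conjugation
  by the involution \<open>c\<close> when \<open>a\<close> is odd. Conjugation preserves parity, so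
  \<open>\<lambda>\<^sub>a \<lambda>\<^sub>b = \<lambda>\<^bsub>a \<circ> \<lambda>\<^sub>a b\<^esub>\<close>, and since every \<open>\<lambda>\<^sub>a\<close> is an automorphism, \<open>a \<circ> b = a + \<lambda>\<^sub>a b\<close>
  defines a skew brace. For odd \<open>x\<close>, \<open>y\<close> the associated solution is
  \<open>r(x, y) = (c y c, (y c) x (y c)\<^sup>-\<^sup>1)\<close> (here \<open>twisted_solution c\<close>), so the transpositions,
  being closed under conjugation, form a subsolution; the braid relation and non-degeneracy
  are direct computations with \<open>c\<^sup>2 = y\<^sup>2 = id\<close>.

  For simplicity, let \<open>f\<close> be a morphism. Comparing the images of \<open>r(t, x)\<close> and then of
  \<open>r(c x c, t)\<close> shows that \<open>f x = f x'\<close> implies \<open>f (t x t) = f (t x' t)\<close> for every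
  transposition \<open>t\<close>. Such a conjugation-invariant identification of two distinct transpositions
  can be moved, using a fifth point if the two are disjoint, to one of two transpositions with
  a common point \<open>e\<close>; conjugating further identifies all \<open>(e w)\<close> and then all transpositions.
\<close>

lemma group_grp:
  assumes closed: "\<And>x y. x \<in> B \<Longrightarrow> y \<in> B \<Longrightarrow> op x y \<in> B"
    and e: "e \<in> B"
    and left_unit: "\<And>x. x \<in> B \<Longrightarrow> op e x = x"
    and right_unit: "\<And>x. x \<in> B \<Longrightarrow> op x e = x"
    and assoc: "\<And>x y z. x \<in> B \<Longrightarrow> y \<in> B \<Longrightarrow> z \<in> B \<Longrightarrow> op (op x y) z = op x (op y z)"
    and left_inverse: "\<And>x. x \<in> B \<Longrightarrow> \<exists>y\<in>B. op y x = e"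
  shows "group (grp B op)" and "one (grp B op) = e"
proof -
  have "(THE u. u \<in> B \<and> (\<forall>x\<in>B. op u x = x \<and> op x u = x)) = e"
    by (rule the_equality) (use e left_unit right_unit in metis)+
  then show one: "one (grp B op) = e"
    by (simp add: grp_def)
  show "group (grp B op)"
    by (rule groupI) (use closed e left_unit assoc left_inverse one in \<open>auto simp: grp_def\<close>)
qed

lemma inv_grp_eqI:
  assumes "group (grp B op)" "x \<in> B" "y \<in> B" "op y x = one (grp B op)"
  shows "inv\<^bsub>grp B op\<^esub> x = y"
  using group.inv_equality[OF assms(1), of y x] assms by (simp add: grp_def)

lemma is_solution_cong:
  assumes eq: "\<And>a b. a \<in> X \<Longrightarrow> b \<in> X \<Longrightarrow> r (a, b) = r' (a, b)"
    and sol: "is_solution X r'"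
  shows "is_solution X r"
proof -
  have closed: "r' (a, b) \<in> X \<times> X" if "a \<in> X" "b \<in> X" for a b
    using sol that unfolding is_solution_def by blast
  have "(let (u1, v1) = r (x, y); (u2, v2) = r (v1, z); (u3, v3) = r (u1, u2)
         in let (p1, q1) = r (y, z); (p2, q2) = r (x, p1); (p3, q3) = r (q2, q1)
         in (u3, v3, v2) = (p2, p3, q3))" if xyz: "x \<in> X" "y \<in> X" "z \<in> X" for x y z
  proof -
    obtain u1 v1 where 1: "r' (x, y) = (u1, v1)" "u1 \<in> X" "v1 \<in> X" using closed xyz by fastforce
    obtain u2 v2 where 2: "r' (v1, z) = (u2, v2)" "u2 \<in> X" "v2 \<in> X" using closed xyz 1 by fastforce
    obtain u3 v3 where 3: "r' (u1, u2) = (u3, v3)" using prod.exhaust by metis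
    obtain p1 q1 where 4: "r' (y, z) = (p1, q1)" "p1 \<in> X" "q1 \<in> X" using closed xyz by fastforce
    obtain p2 q2 where 5: "r' (x, p1) = (p2, q2)" "q2 \<in> X" using closed xyz 4 by fastforce
    obtain p3 q3 where 6: "r' (q2, q1) = (p3, q3)" using prod.exhaust by metis
    have "let (u1, v1) = r' (x, y); (u2, v2) = r' (v1, z); (u3, v3) = r' (u1, u2)
         in let (p1, q1) = r' (y, z); (p2, q2) = r' (x, p1); (p3, q3) = r' (q2, q1)
         in (u3, v3, v2) = (p2, p3, q3)"
      using sol xyz unfolding is_solution_def by blast
    then show ?thesis
      using 1 2 3 4 5 6 xyz by (simp add: eq)
  qed
  moreover have "r p \<in> X \<times> X" if "p \<in> X \<times> X" for p
    using that closed eq by auto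
  ultimately show ?thesis
    unfolding is_solution_def by blast
qed

lemma non_degenerate_cong:
  assumes eq: "\<And>a b. a \<in> X \<Longrightarrow> b \<in> X \<Longrightarrow> r (a, b) = r' (a, b)"
  shows "non_degenerate X r \<longleftrightarrow> non_degenerate X r'"
proof -
  have "bij_betw r (X \<times> X) (X \<times> X) = bij_betw r' (X \<times> X) (X \<times> X)"
    by (rule bij_betw_cong) (use eq in auto)
  moreover have "bij_betw (sol_lambda r x) X X = bij_betw (sol_lambda r' x) X X" if "x \<in> X" for x
    by (rule bij_betw_cong) (use eq that in \<open>auto simp: sol_lambda_def\<close>)
  moreover have "bij_betw (sol_rho r y) X X = bij_betw (sol_rho r' y) X X" if "y \<in> X" for y
    by (rule bij_betw_cong) (use eq that in \<open>auto simp: sol_rho_def\<close>)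
  ultimately show ?thesis
    unfolding non_degenerate_def by simp
qed

lemma simple_solution_cong:
  assumes eq: "\<And>a b. a \<in> X \<Longrightarrow> b \<in> X \<Longrightarrow> r (a, b) = r' (a, b)"
  shows "simple_solution T X r \<longleftrightarrow> simple_solution T X r'"
  using eq unfolding simple_solution_def sol_morphism_def by simp

lemma involution_cancel: "g \<circ> g = id \<Longrightarrow> g \<circ> (g \<circ> f) = f"
  by (simp flip: comp_assoc)

definition twist :: "('a \<Rightarrow> 'a) \<Rightarrow> ('a \<Rightarrow> 'a) \<Rightarrow> ('a \<Rightarrow> 'a) \<Rightarrow> 'a \<Rightarrow> 'a" where
  "twist c a b = (if evenperm a then b else c \<circ> b \<circ> Hilbert_Choice.inv c)"

lemma twist_involution:
  assumes "c \<circ> c = id"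
  shows "twist c a b = (if evenperm a then b else c \<circ> (b \<circ> c))"
  using assms inv_unique_comp[OF assms assms] by (simp add: twist_def comp_assoc)

lemma twist_id [simp]: "twist c a id = id" if "c \<circ> c = id"
  using that by (simp add: twist_involution)

lemma twist_id_left [simp]: "twist c id b = b"
  by (simp add: twist_def)

lemma twist_comp:
  assumes "c \<circ> c = id"
  shows "twist c a (b \<circ> d) = twist c a b \<circ> twist c a d"
  by (simp add: twist_involution[OF assms] involution_cancel[OF assms] comp_assoc)

lemma twist_permutes:
  assumes "c permutes S" "b permutes S"
  shows "twist c a b permutes S"
  using assms by (simp add: twist_def permutes_compose permutes_inv)

lemma permutation_twist: "permutation c \<Longrightarrow> permutation b \<Longrightarrow> permutation (twist c a b)"
  by (simp add: twist_def permutation_compose permutation_inverse)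

lemma evenperm_twist:
  assumes "permutation c" "permutation b"
  shows "evenperm (twist c a b) = evenperm b"
  using assms by (simp add: twist_def evenperm_comp evenperm_inv permutation_compose permutation_inverse) blast

lemma twist_twist:
  assumes "permutation c" "c \<circ> c = id" "permutation a" "permutation b"
  shows "twist c a (twist c b d) = twist c (a \<circ> twist c a b) d"
proof -
  have "evenperm (a \<circ> twist c a b) \<longleftrightarrow> (evenperm a \<longleftrightarrow> evenperm b)"
    using assms by (simp add: evenperm_comp evenperm_twist permutation_twist)
  then show ?thesis
    using assms(2) by (cases "evenperm a"; cases "evenperm b") (simp_all add: twist_involution involution_cancel comp_assoc)
qed

lemma group_grp_permutes:
  shows "group (grp {p. p permutes S} (\<circ>))"
    and "one (grp {p. p permutes S} (\<circ>)) = id"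
    and "a permutes S \<Longrightarrow> inv\<^bsub>grp {p. p permutes S} (\<circ>)\<^esub> a = Hilbert_Choice.inv a"
proof -
  have "\<exists>q\<in>{p. p permutes S}. q \<circ> p = id" if "p \<in> {p. p permutes S}" for p
    using that permutes_inv permutes_inv_o by blast
  from group_grp[of _ _ id, OF _ _ _ _ _ this]
  show grp: "group (grp {p. p permutes S} (\<circ>))" and one: "one (grp {p. p permutes S} (\<circ>)) = id"
    by (simp_all add: permutes_compose comp_assoc)
  show "a permutes S \<Longrightarrow> inv\<^bsub>grp {p. p permutes S} (\<circ>)\<^esub> a = Hilbert_Choice.inv a"
    by (rule inv_grp_eqI[OF grp]) (simp_all add: one permutes_inv permutes_inv_o)
qed

context
  fixes S :: "'a set" and c :: "'a \<Rightarrow> 'a"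
  assumes finite: "finite S" and c_permutes: "c permutes S" and c_involution: "c \<circ> c = id"
begin

private lemma permutes_permutation: "p permutes S \<Longrightarrow> permutation p"
  using finite permutes_imp_permutation by blast

lemma group_grp_twisted:
  shows "group (grp {p. p permutes S} (\<lambda>a b. a \<circ> twist c a b))"
    and "one (grp {p. p permutes S} (\<lambda>a b. a \<circ> twist c a b)) = id"
    and "a permutes S \<Longrightarrow>
      inv\<^bsub>grp {p. p permutes S} (\<lambda>a b. a \<circ> twist c a b)\<^esub> a = Hilbert_Choice.inv (twist c a a)"
proof -
  let ?G = "grp {p. p permutes S} (\<lambda>a b. a \<circ> twist c a b)"
  have left_inverse: "Hilbert_Choice.inv (twist c a a) \<circ> twist c (Hilbert_Choice.inv (twist c a a)) a = id"
    if a: "a permutes S" for a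
  proof -
    have "twist c a a permutes S"
      using twist_permutes[OF c_permutes a] .
    moreover from this have "evenperm (Hilbert_Choice.inv (twist c a a)) = evenperm a"
      by (simp add: evenperm_inv evenperm_twist permutes_permutation c_permutes a)
    then have "twist c (Hilbert_Choice.inv (twist c a a)) a = twist c a a"
      by (simp add: twist_def)
    ultimately show ?thesis
      by (simp add: permutes_inv_o)
  qed
  have assoc: "(a \<circ> twist c a b) \<circ> twist c (a \<circ> twist c a b) d = a \<circ> twist c a (b \<circ> twist c b d)"
    if "a permutes S" "b permutes S" for a b d
    using that by (simp add: twist_comp twist_twist c_involution permutes_permutation c_permutes comp_assoc)
  have "\<exists>q\<in>{p. p permutes S}. q \<circ> twist c q a = id" if "a \<in> {p. p permutes S}" for a
    using that left_inverse twist_permutes[OF c_permutes] permutes_inv by blast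
  from group_grp[of _ _ id, OF _ _ _ _ _ this]
  show grp: "group ?G" and one: "one ?G = id"
    using assoc by (simp_all add: twist_permutes c_permutes permutes_compose c_involution)
  show "a permutes S \<Longrightarrow> inv\<^bsub>?G\<^esub> a = Hilbert_Choice.inv (twist c a a)"
    by (rule inv_grp_eqI[OF grp]) (simp_all add: one left_inverse twist_permutes c_permutes permutes_inv)
qed

lemma skew_left_brace_twisted: "skew_left_brace {p. p permutes S} (\<circ>) (\<lambda>a b. a \<circ> twist c a b)"
proof -
  have "a \<circ> twist c a (b \<circ> d) = (a \<circ> twist c a b) \<circ> Hilbert_Choice.inv a \<circ> (a \<circ> twist c a d)"
    if "a permutes S" for a b d
    using that by (simp add: twist_comp c_involution comp_assoc permutes_inv_o(2) flip: comp_assoc[of "Hilbert_Choice.inv a"])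
  then show ?thesis
    unfolding skew_left_brace_def by (simp add: group_grp_permutes group_grp_twisted)
qed

lemma brace_lambda_twisted:
  assumes "a permutes S"
  shows "brace_lambda {p. p permutes S} (\<circ>) (\<lambda>a b. a \<circ> twist c a b) a b = twist c a b"
  using assms by (simp add: brace_lambda_def group_grp_permutes(3) permutes_inv_o(2) flip: comp_assoc)

end

definition transpositions :: "'a set \<Rightarrow> ('a \<Rightarrow> 'a) set" where
  "transpositions S = {transpose i j | i j. i \<in> S \<and> j \<in> S \<and> i \<noteq> j}"

lemma transpose_in_transpositions: "i \<in> S \<Longrightarrow> j \<in> S \<Longrightarrow> i \<noteq> j \<Longrightarrow> transpose i j \<in> transpositions S"
  unfolding transpositions_def by blast

lemma transpositions_permutes: "x \<in> transpositions S \<Longrightarrow> x permutes S"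
  unfolding transpositions_def by (auto intro: permutes_swap_id)

lemma transpositions_odd: "x \<in> transpositions S \<Longrightarrow> \<not> evenperm x"
  unfolding transpositions_def by (auto simp: evenperm_swap)

lemma transpositions_involution [simp]: "x \<in> transpositions S \<Longrightarrow> x \<circ> x = id"
  unfolding transpositions_def by auto

lemma transpositions_cancel [simp]: "x \<in> transpositions S \<Longrightarrow> x \<circ> (x \<circ> f) = f"
  by (simp add: involution_cancel)

lemma transpositions_inv [simp]: "x \<in> transpositions S \<Longrightarrow> Hilbert_Choice.inv x = x"
  unfolding transpositions_def by auto

lemma transpose_conj: "transpose u v \<circ> transpose i j \<circ> transpose u v = transpose (transpose u v i) (transpose u v j)"
  by (auto simp: fun_eq_iff transpose_def)

lemma conj_in_transpositions:
  assumes "p permutes S" "q \<circ> p = id" "x \<in> transpositions S"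
  shows "p \<circ> (x \<circ> q) \<in> transpositions S"
proof -
  obtain i j where x: "x = transpose i j" "i \<in> S" "j \<in> S" "i \<noteq> j"
    using assms(3) unfolding transpositions_def by blast
  have "q = q \<circ> (p \<circ> Hilbert_Choice.inv p)"
    using permutes_inv_o(1)[OF assms(1)] by simp
  also have "\<dots> = Hilbert_Choice.inv p"
    using assms(2) by (simp flip: comp_assoc)
  finally have q: "q = Hilbert_Choice.inv p" .
  have "transpose (p i) (p j) \<circ> p = p \<circ> x"
    using transpose_comp_eq[of p "p i" "p j"] assms(1) x(1) by (simp add: permutes_bij permutes_inverses(2))
  then have "p \<circ> (x \<circ> q) = transpose (p i) (p j) \<circ> (p \<circ> q)"
    by (metis comp_assoc)
  then have "p \<circ> (x \<circ> q) = transpose (p i) (p j)"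
    using q permutes_inv_o(1)[OF assms(1)] by simp
  moreover have "p i \<in> S" "p j \<in> S" "p i \<noteq> p j"
    using x assms(1) by (simp_all add: permutes_in_image inj_eq[OF permutes_inj[OF assms(1)]])
  ultimately show ?thesis
    by (simp add: transpose_in_transpositions)
qed

lemma card_transpositions:
  assumes "finite S"
  shows "card (transpositions S) = card S choose 2"
proof -
  let ?support = "\<lambda>p. {x. p x \<noteq> x}"
  have support: "?support (transpose i j) = {i, j}" if "i \<noteq> j" for i j :: 'a
    using that by (auto simp: transpose_def)
  have "bij_betw ?support (transpositions S) {A. A \<subseteq> S \<and> card A = 2}"
  proof (rule bij_betw_imageI)
    show "inj_on ?support (transpositions S)"
      by (rule inj_onI) (auto simp: transpositions_def support doubleton_eq_iff transpose_commute)
    have "?support ` transpositions S = {{i, j} | i j. i \<in> S \<and> j \<in> S \<and> i \<noteq> j}"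
      unfolding transpositions_def using support by auto metis+
    also have "\<dots> = {A. A \<subseteq> S \<and> card A = 2}"
      by (auto simp: card_2_iff)
    finally show "?support ` transpositions S = {A. A \<subseteq> S \<and> card A = 2}" .
  qed
  then have "card (transpositions S) = card {A. A \<subseteq> S \<and> card A = 2}"
    by (rule bij_betw_same_card)
  also have "\<dots> = card S choose 2"
    using n_subsets[OF assms] by simp
  finally show ?thesis .
qed

definition twisted_solution :: "('a \<Rightarrow> 'a) \<Rightarrow> ('a \<Rightarrow> 'a) \<times> ('a \<Rightarrow> 'a) \<Rightarrow> ('a \<Rightarrow> 'a) \<times> ('a \<Rightarrow> 'a)" where
  "twisted_solution c = (\<lambda>(x, y). (c \<circ> y \<circ> c, y \<circ> c \<circ> x \<circ> c \<circ> y))"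

lemma twisted_solution_apply [simp]:
  "twisted_solution c (x, y) = (c \<circ> (y \<circ> c), y \<circ> (c \<circ> (x \<circ> (c \<circ> y))))"
  by (simp add: twisted_solution_def comp_assoc)

lemma brace_solution_twisted:
  assumes "finite S" "c permutes S" "c \<circ> c = id"
    and x: "x \<in> transpositions S" and y: "y \<in> transpositions S"
  shows "brace_solution {p. p permutes S} (\<circ>) (\<lambda>a b. a \<circ> twist c a b) (x, y) = twisted_solution c (x, y)"
proof -
  note c_cancel [simp] = involution_cancel[OF assms(3)]
  have perm: "permutation x" "permutation y" "permutation c"
    using assms(1,2) x y transpositions_permutes permutes_imp_permutation by blast+
  have cyc: "c \<circ> (y \<circ> c) \<in> transpositions S"
    using conj_in_transpositions[OF assms(2,3) y] .
  have lambda: "brace_lambda {p. p permutes S} (\<circ>) (\<lambda>a b. a \<circ> twist c a b) x y = c \<circ> (y \<circ> c)"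
    using brace_lambda_twisted[OF assms(1-3) transpositions_permutes[OF x]] transpositions_odd[OF x] assms(3)
    by (simp add: twist_involution)
  have "inv\<^bsub>grp {p. p permutes S} (\<lambda>a b. a \<circ> twist c a b)\<^esub> (c \<circ> (y \<circ> c)) = y"
    using group_grp_twisted(3)[OF assms(1-3) transpositions_permutes[OF cyc]]
      transpositions_odd[OF cyc] assms(3) y
    by (simp add: twist_involution comp_assoc)
  moreover have "evenperm (y \<circ> (c \<circ> (x \<circ> c)))"
    using transpositions_odd[OF x] transpositions_odd[OF y] transpositions_odd[OF cyc] perm
    by (simp add: evenperm_comp permutation_compose)
  ultimately show ?thesis
    using lambda transpositions_odd[OF y] assms(3)
    by (simp add: brace_solution_def twist_involution comp_assoc)
qed

context
  fixes S :: "'a set" and c :: "'a \<Rightarrow> 'a"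
  assumes c_permutes: "c permutes S" and c_involution: "c \<circ> c = id"
begin

declare c_involution [simp] involution_cancel[OF c_involution, simp]

lemma c_conj_in_transpositions: "x \<in> transpositions S \<Longrightarrow> c \<circ> (x \<circ> c) \<in> transpositions S"
  using conj_in_transpositions[OF c_permutes c_involution] .

lemma conj_by_twisted_in_transpositions:
  assumes "x \<in> transpositions S" "y \<in> transpositions S"
  shows "y \<circ> (c \<circ> (x \<circ> (c \<circ> y))) \<in> transpositions S"
    and "c \<circ> (y \<circ> (x \<circ> (y \<circ> c))) \<in> transpositions S"
proof -
  have "y \<circ> c permutes S" "c \<circ> y permutes S"
    using assms(2) by (simp_all add: permutes_compose transpositions_permutes c_permutes)
  moreover have "(c \<circ> y) \<circ> (y \<circ> c) = id" "(y \<circ> c) \<circ> (c \<circ> y) = id"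
    using assms(2) by (simp_all add: comp_assoc)
  ultimately show "y \<circ> (c \<circ> (x \<circ> (c \<circ> y))) \<in> transpositions S"
    and "c \<circ> (y \<circ> (x \<circ> (y \<circ> c))) \<in> transpositions S"
    using conj_in_transpositions assms(1) by (metis comp_assoc)+
qed

lemma twisted_solution_in_transpositions:
  "x \<in> transpositions S \<Longrightarrow> y \<in> transpositions S \<Longrightarrow>
    twisted_solution c (x, y) \<in> transpositions S \<times> transpositions S"
  by (simp add: c_conj_in_transpositions conj_by_twisted_in_transpositions)

lemma twisted_solution_braid:
  assumes "z \<circ> z = id"
  shows "let (u1, v1) = twisted_solution c (x, y); (u2, v2) = twisted_solution c (v1, z);
             (u3, v3) = twisted_solution c (u1, u2)
         in let (p1, q1) = twisted_solution c (y, z); (p2, q2) = twisted_solution c (x, p1);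
             (p3, q3) = twisted_solution c (q2, q1)
         in (u3, v3, v2) = (p2, p3, q3)"
  by (simp add: Let_def comp_assoc involution_cancel[OF assms])

lemma is_solution_twisted: "is_solution (transpositions S) (twisted_solution c)"
proof -
  have closed: "twisted_solution c p \<in> transpositions S \<times> transpositions S"
    if "p \<in> transpositions S \<times> transpositions S" for p
    using that twisted_solution_in_transpositions by (cases p) (simp del: twisted_solution_apply)
  show ?thesis
    unfolding is_solution_def using closed twisted_solution_braid transpositions_involution by blast
qed

lemma non_degenerate_twisted: "non_degenerate (transpositions S) (twisted_solution c)"
proof -
  let ?T = "transpositions S"
  have "bij_betw (twisted_solution c) (?T \<times> ?T) (?T \<times> ?T)"
  proof (rule bij_betwI[where g = "\<lambda>(u, v). (u \<circ> c \<circ> v \<circ> c \<circ> u, c \<circ> u \<circ> c)"])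
    show "twisted_solution c \<in> ?T \<times> ?T \<rightarrow> ?T \<times> ?T"
      using twisted_solution_in_transpositions by auto
    show "(\<lambda>(u, v). (u \<circ> c \<circ> v \<circ> c \<circ> u, c \<circ> u \<circ> c)) \<in> ?T \<times> ?T \<rightarrow> ?T \<times> ?T"
      using twisted_solution_in_transpositions c_conj_in_transpositions by (auto simp: comp_assoc)
  qed (auto simp: comp_assoc)
  moreover have "bij_betw (sol_lambda (twisted_solution c) x) ?T ?T" for x
    by (rule bij_betwI[where g = "\<lambda>y. c \<circ> y \<circ> c"])
      (auto simp: sol_lambda_def comp_assoc c_conj_in_transpositions)
  moreover have "bij_betw (sol_rho (twisted_solution c) y) ?T ?T" if "y \<in> ?T" for y
    by (rule bij_betwI[where g = "\<lambda>v. c \<circ> y \<circ> v \<circ> y \<circ> c"])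
      (use that in \<open>auto simp: sol_rho_def comp_assoc conj_by_twisted_in_transpositions\<close>)
  ultimately show ?thesis
    unfolding non_degenerate_def by blast
qed

end

lemma transpose_pair_cases:
  assumes "a \<noteq> b" "p \<noteq> q" "transpose a b \<noteq> transpose p q"
  obtains e u v where "transpose a b = transpose e u" "transpose p q = transpose e v"
      "{e, u, v} \<subseteq> {a, b, p, q}" "e \<noteq> u" "e \<noteq> v" "u \<noteq> v"
    | "a \<notin> {p, q}" "b \<notin> {p, q}"
proof -
  consider "a = p" | "a = q" | "b = p" | "b = q" | "a \<notin> {p, q}" "b \<notin> {p, q}"
    by blast
  then show thesis
  proof cases
    case 1
    then show thesis
      using that(1)[of a b q] assms by auto
  next
    case 2
    then show thesis
      using that(1)[of a b p] assms transpose_commute[of p q] by auto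
  next
    case 3
    then show thesis
      using that(1)[of b a q] assms transpose_commute[of a b] by auto
  next
    case 4
    then show thesis
      using that(1)[of b a p] assms transpose_commute[of a b] transpose_commute[of p q] by auto
  qed (use that(2) in blast)
qed

context
  fixes S :: "'a set" and f :: "('a \<Rightarrow> 'a) \<Rightarrow> 'b"
  assumes conj_compatible: "\<And>t x x'. t \<in> transpositions S \<Longrightarrow> x \<in> transpositions S \<Longrightarrow>
      x' \<in> transpositions S \<Longrightarrow> f x = f x' \<Longrightarrow> f (t \<circ> x \<circ> t) = f (t \<circ> x' \<circ> t)"
begin

lemma conj_compatible_transpose:
  assumes "u \<in> S" "v \<in> S" "u \<noteq> v" "{i, j, k, l} \<subseteq> S" "i \<noteq> j" "k \<noteq> l"
    and "f (transpose i j) = f (transpose k l)"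
  shows "f (transpose (transpose u v i) (transpose u v j)) = f (transpose (transpose u v k) (transpose u v l))"
  using conj_compatible[of "transpose u v" "transpose i j" "transpose k l"] assms
  by (simp add: transpose_in_transpositions transpose_conj)

lemma constant_if_identifies_adjacent:
  assumes "{e, u, v} \<subseteq> S" "e \<noteq> u" "e \<noteq> v" "u \<noteq> v"
    and "f (transpose e u) = f (transpose e v)"
  shows "f ` transpositions S = {f (transpose e u)}"
proof -
  have star: "f (transpose e w) = f (transpose e u)" if "w \<in> S" "w \<noteq> e" for w
  proof (cases "w \<in> {u, v}")
    case False
    then show ?thesis
      using conj_compatible_transpose[of v w e u e v] assms that by auto
  qed (use assms in auto)
  have "f (transpose i j) = f (transpose e u)" if "i \<in> S" "j \<in> S" "i \<noteq> j" for i j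
  proof -
    consider "e \<in> {i, j}" | "e \<notin> {i, j}" by blast
    then show ?thesis
    proof cases
      case 1
      then show ?thesis
        using star that transpose_commute by (metis insertE singletonD)
    next
      case 2
      then have "f (transpose e i) = f (transpose e j)"
        using star that by auto
      then have "f (transpose j i) = f (transpose j e)"
        using conj_compatible_transpose[of e j e i e j] assms that 2 by auto
      then show ?thesis
        using star that 2 transpose_commute by metis
    qed
  qed
  then show ?thesis
    using assms transpose_in_transpositions[of e S u] unfolding transpositions_def by blast
qed

lemma constant_if_not_injective:
  assumes "5 \<le> card S" "x1 \<in> transpositions S" "x2 \<in> transpositions S" "x1 \<noteq> x2" "f x1 = f x2"
  shows "\<exists>y. f ` transpositions S = {y}"
proof -
  obtain a b p q where ab: "x1 = transpose a b" "a \<in> S" "b \<in> S" "a \<noteq> b"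
    and pq: "x2 = transpose p q" "p \<in> S" "q \<in> S" "p \<noteq> q"
    using assms(2,3) unfolding transpositions_def by blast
  have ne: "transpose a b \<noteq> transpose p q"
    using assms(4) ab(1) pq(1) by simp
  show ?thesis
  proof (cases rule: transpose_pair_cases[OF ab(4) pq(4) ne])
    case (1 e u v)
    have "{e, u, v} \<subseteq> S"
      using 1(3) ab pq by blast
    moreover have "f (transpose e u) = f (transpose e v)"
      using 1(1,2) ab(1) pq(1) assms(5) by simp
    ultimately show ?thesis
      using constant_if_identifies_adjacent 1(4-6) by blast
  next
    case 2
    have "card {a, b, p, q} \<le> 4"
      using card_length[of "[a, b, p, q]"] by simp
    then have "\<not> S \<subseteq> {a, b, p, q}"
      using assms(1) card_mono[of "{a, b, p, q}" S] by auto
    then obtain w where w: "w \<in> S" "w \<notin> {a, b, p, q}"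
      by blast
    have "f (transpose (transpose q w p) (transpose q w q)) = f (transpose (transpose q w a) (transpose q w b))"
      using conj_compatible_transpose[of q w p q a b] w ab pq assms(5) by auto
    moreover have "transpose q w p = p" "transpose q w a = a" "transpose q w b = b"
      using w 2 pq by auto
    ultimately have "f (transpose p w) = f (transpose p q)"
      using ab(1) pq(1) assms(5) by simp
    moreover have "{p, w, q} \<subseteq> S" "p \<noteq> w" "p \<noteq> q" "w \<noteq> q"
      using w pq by auto
    ultimately show ?thesis
      using constant_if_identifies_adjacent by blast
  qed
qed

end

lemma morphism_twisted_conj_compatible:
  fixes f :: "('a \<Rightarrow> 'a) \<Rightarrow> 'b"
  assumes "c \<circ> c = id" and c_conj: "\<And>x. x \<in> X \<Longrightarrow> c \<circ> (x \<circ> c) \<in> X"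
    and morph: "sol_morphism X (twisted_solution c) Y s f"
    and "t \<in> X" "x \<in> X" "x' \<in> X" "f x = f x'"
  shows "f (t \<circ> x \<circ> t) = f (t \<circ> x' \<circ> t)"
proof -
  have hom: "map_prod f f (twisted_solution c (u, v)) = s (f u, f v)" if "u \<in> X" "v \<in> X" for u v
    using morph that unfolding sol_morphism_def by blast
  have "map_prod f f (twisted_solution c (t, x)) = map_prod f f (twisted_solution c (t, x'))"
    using hom[of t x] hom[of t x'] assms(4-7) by presburger
  then have "f (c \<circ> (x \<circ> c)) = f (c \<circ> (x' \<circ> c))"
    by simp
  then have "map_prod f f (twisted_solution c (c \<circ> (x \<circ> c), t)) = map_prod f f (twisted_solution c (c \<circ> (x' \<circ> c), t))"
    using hom c_conj assms(4-6) by metis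
  then show ?thesis
    by (simp add: comp_assoc involution_cancel[OF assms(1)])
qed

lemma simple_solution_twisted:
  assumes "5 \<le> card S" "c permutes S" "c \<circ> c = id"
  shows "simple_solution TYPE('b) (transpositions S) (twisted_solution c)"
  unfolding simple_solution_def
proof (intro conjI allI impI)
  have "finite S"
    using assms(1) card.infinite by force
  moreover have "5 * 4 \<le> card S * (card S - 1)"
    using assms(1) by (intro mult_le_mono) auto
  ultimately show "1 < card (transpositions S)"
    by (simp add: card_transpositions choose_two)
next
  fix Y s and f :: "('a \<Rightarrow> 'a) \<Rightarrow> 'b"
  assume Y: "is_solution Y s \<and> sol_morphism (transpositions S) (twisted_solution c) Y s f
    \<and> f ` transpositions S = Y"
  show "bij_betw f (transpositions S) Y \<or> (\<exists>y. Y = {y})"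
  proof (cases "inj_on f (transpositions S)")
    case True
    then show ?thesis
      using Y by (simp add: bij_betw_def)
  next
    case False
    then obtain x1 x2 where "x1 \<in> transpositions S" "x2 \<in> transpositions S" "x1 \<noteq> x2" "f x1 = f x2"
      unfolding inj_on_def by blast
    moreover note morphism_twisted_conj_compatible[OF assms(3) conj_in_transpositions[OF assms(2,3)]]
    ultimately show ?thesis
      using constant_if_not_injective[of S f] assms(1) Y by blast
  qed
qed

theorem mainTheorem17:
  fixes n :: nat
  assumes "n \<ge> 5"
  defines "B \<equiv> {p :: nat \<Rightarrow> nat. p permutes {1..n}}"
      and "add \<equiv> (\<lambda>a b :: nat \<Rightarrow> nat. a \<circ> b)"
      and "circ \<equiv> (\<lambda>a b :: nat \<Rightarrow> nat. a \<circ> (if evenperm a then b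
              else transpose (1::nat) 2 \<circ> b \<circ> Hilbert_Choice.inv (transpose (1::nat) 2)))"
      and "X \<equiv> {transpose i j | i j. i \<in> {1..n} \<and> j \<in> {1..n} \<and> i \<noteq> j}"
  shows "skew_left_brace B add circ
    \<and> brace_solution B add circ ` (X \<times> X) = X \<times> X
    \<and> is_solution X (brace_solution B add circ)
    \<and> non_degenerate X (brace_solution B add circ)
    \<and> simple_solution TYPE('b) X (brace_solution B add circ)
    \<and> card X = n * (n - 1) div 2"
proof -
  let ?c = "transpose (1::nat) 2" and ?S = "{1..n}"
  have c: "?c permutes ?S" "?c \<circ> ?c = id"
    using assms(1) by (auto intro: permutes_swap_id)
  have brace: "B = {p. p permutes ?S}" "add = (\<circ>)" "circ = (\<lambda>a b. a \<circ> twist ?c a b)"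
    unfolding B_def add_def circ_def twist_def by (rule refl)+
  have X: "X = transpositions ?S"
    unfolding X_def transpositions_def ..
  have eq: "brace_solution B add circ (x, y) = twisted_solution ?c (x, y)" if "x \<in> X" "y \<in> X" for x y
    using brace_solution_twisted[OF _ c] that unfolding brace X by simp
  have nondeg: "non_degenerate X (twisted_solution ?c)"
    unfolding X using non_degenerate_twisted[OF c] .
  have "brace_solution B add circ ` (X \<times> X) = twisted_solution ?c ` (X \<times> X)"
    using eq by (auto intro!: image_cong)
  also have "\<dots> = X \<times> X"
    using nondeg by (simp add: non_degenerate_def bij_betw_def)
  finally have "brace_solution B add circ ` (X \<times> X) = X \<times> X" .
  moreover have "is_solution X (brace_solution B add circ)"
    by (rule is_solution_cong[OF _ is_solution_twisted[OF c, folded X]]) (simp add: eq)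
  moreover have "non_degenerate X (brace_solution B add circ)"
    by (subst non_degenerate_cong[where r' = "twisted_solution ?c"]) (use nondeg in \<open>simp_all add: eq\<close>)
  moreover have "simple_solution TYPE('b) X (brace_solution B add circ)"
    by (subst simple_solution_cong[where r' = "twisted_solution ?c"])
      (use assms(1) simple_solution_twisted[OF _ c] in \<open>simp_all add: eq X\<close>)
  ultimately show ?thesis
    using skew_left_brace_twisted[OF _ c] card_transpositions[of ?S]
    unfolding brace X by (simp add: choose_two)
qed

end
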